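(* Let $(\mu,\nu)\in\boldsymbol{\mathcal P}$ and $\mathcal F=\mathcal F_{(\mu,\nu)}$. If $(x,y)\in\mathbb S$ with $x+y\ge2\beta$, then $$d_W\big(\mathcal F(x,y),\delta_{x/(x+y)}\big)<2\sqrt{\frac{\beta}{x+y}}.$$
   Context: Fix $0<m_0\le\beta<\infty$. $\boldsymbol{\mathcal P}$: pairs $(\mu,\nu)$ of probability measures on $[0,\beta]$ with $\int k\,\mu(dk)=\int k\,\nu(dk)\ge m_0$. $d_W$: 1-Wasserstein metric; $\delta_t$: point mass at $t$. $\mathbb S=[0,\infty)^2\setminus\{(0,0)\}$. RRU: with $\{U_n\}$ i.i.d. uniform$[0,1]$ independent of i.i.d. $\{(V_n,W_n)\}$ with uniform$[0,1]$ marginals, $R_X(n)=q_\mu(V_n)$, $R_Y(n)=q_\nu(W_n)$ (quantile functions), $X_0=x,Y_0=y$, $X_{n+1}=X_n+R_X(n+1)\mathbb I(n+1)$, $Y_{n+1}=Y_n+R_Y(n+1)(1-\mathbb I(n+1))$, $\mathbb I(n+1)=\mathbf 1\{U_{n+1}\le X_n/(X_n+Y_n)\}$; $Z_n(x,y)=X_n/(X_n+Y_n)$ converges a.s. to $Z_\infty(x,y)$, and $\mathcal F_{(\mu,\nu)}(x,y)$ is the law of $Z_\infty(x,y)$. *)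

theory Defs
  imports "HOL-Probability.Probability"
begin

definition prob_on_interval :: "real \<Rightarrow> real measure \<Rightarrow> bool" where
  "prob_on_interval \<beta> \<mu> \<longleftrightarrow> prob_space \<mu> \<and> sets \<mu> = sets borel \<and> measure \<mu> {0..\<beta>} = 1"

definition in_P :: "real \<Rightarrow> real \<Rightarrow> real measure \<Rightarrow> real measure \<Rightarrow> bool" where
  "in_P m0 \<beta> \<mu> \<nu> \<longleftrightarrow> prob_on_interval \<beta> \<mu> \<and> prob_on_interval \<beta> \<nu> \<and>
     (\<integral>k. k \<partial>\<mu>) = (\<integral>k. k \<partial>\<nu>) \<and> (\<integral>k. k \<partial>\<mu>) \<ge> m0"

definition quantile :: "real measure \<Rightarrow> real \<Rightarrow> real" where
  "quantile \<mu> v = Inf {t. v \<le> measure \<mu> {..t}}"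

fun rru :: "real measure \<Rightarrow> real measure \<Rightarrow> real \<Rightarrow> real \<Rightarrow>
    (nat \<Rightarrow> real) \<Rightarrow> (nat \<Rightarrow> real) \<Rightarrow> (nat \<Rightarrow> real) \<Rightarrow> nat \<Rightarrow> real \<times> real" where
  "rru \<mu> \<nu> x y U V W 0 = (x, y)"
| "rru \<mu> \<nu> x y U V W (Suc n) =
     (let (X, Y) = rru \<mu> \<nu> x y U V W n in
      if U (Suc n) \<le> X / (X + Y)
      then (X + quantile \<mu> (V (Suc n)), Y)
      else (X, Y + quantile \<nu> (W (Suc n))))"

definition rru_Z :: "real measure \<Rightarrow> real measure \<Rightarrow> real \<Rightarrow> real \<Rightarrow>
    (nat \<Rightarrow> real) \<Rightarrow> (nat \<Rightarrow> real) \<Rightarrow> (nat \<Rightarrow> real) \<Rightarrow> nat \<Rightarrow> real" where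
  "rru_Z \<mu> \<nu> x y U V W n =
     (let (X, Y) = rru \<mu> \<nu> x y U V W n in X / (X + Y))"

definition wasserstein1 :: "real measure \<Rightarrow> real measure \<Rightarrow> ennreal" where
  "wasserstein1 P Q = (INF \<pi> \<in> {\<pi>. prob_space \<pi> \<and> sets \<pi> = sets (borel \<Otimes>\<^sub>M borel) \<and>
        distr \<pi> borel fst = P \<and> distr \<pi> borel snd = Q}.
      \<integral>\<^sup>+ z. ennreal \<bar>fst z - snd z\<bar> \<partial>\<pi>)"

end

theory Submission
  imports Defs
begin

text \<open>Write \<open>S\<^sub>n = X\<^sub>n + Y\<^sub>n\<close> and \<open>z = x/(x+y)\<close>.  The process
  \<open>(Z\<^sub>n - z)\<^sup>2 + 3\<beta>/S\<^sub>n\<close> is a supermartingale as long as \<open>S\<^sub>n \<ge> 2\<beta>\<close>: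
  expanding one step to first order, the drifts of the two colours cancel because \<open>\<mu>\<close> and \<open>\<nu>\<close>
  have the same mean, and the second-order terms, of size \<open>\<beta> k/S\<^sup>2\<close>, are absorbed by the
  decrease of \<open>3\<beta>/S\<close>.  Its initial value is \<open>3\<beta>/(x+y)\<close>, so Fatou's lemma bounds
  \<open>E (Z\<^sub>\<infinity> - z)\<^sup>2\<close> by \<open>3\<beta>/(x+y)\<close>.  Coupling \<open>Z\<^sub>\<infinity>\<close> with the constant \<open>z\<close>
  bounds the Wasserstein distance by \<open>E \<bar>Z\<^sub>\<infinity> - z\<bar>\<close>, which is at most
  \<open>\<surd>(3\<beta>/(x+y)) < 2\<surd>(\<beta>/(x+y))\<close>.\<close>

section \<open>Quantile functions of distributions on \<open>[0,\<beta>]\<close>\<close>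

lemma prob_on_interval_nonneg: "prob_on_interval \<beta> \<mu> \<Longrightarrow> 0 \<le> \<beta>"
  by (rule ccontr) (simp add: prob_on_interval_def)

lemma prob_on_interval_cdf_neg:
  assumes P: "prob_on_interval \<beta> \<mu>" and t: "t < 0"
  shows "measure \<mu> {..t} = 0"
proof -
  interpret prob_space \<mu> using P by (simp add: prob_on_interval_def)
  have s: "sets \<mu> = sets borel" using P by (simp add: prob_on_interval_def)
  have "measure \<mu> {..t} \<le> measure \<mu> (space \<mu> - {0..\<beta>})"
    using t s by (intro finite_measure_mono) (auto simp: sets_eq_imp_space_eq[OF s])
  also have "\<dots> = 0" using P s by (simp add: prob_compl prob_on_interval_def)
  finally show ?thesis using measure_nonneg[of \<mu> "{..t}"] by linarith
qed

lemma prob_on_interval_cdf_ge: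
  assumes P: "prob_on_interval \<beta> \<mu>" and t: "\<beta> \<le> t"
  shows "measure \<mu> {..t} = 1"
proof -
  interpret prob_space \<mu> using P by (simp add: prob_on_interval_def)
  have "measure \<mu> {0..\<beta>} \<le> measure \<mu> {..t}"
    using P t by (intro finite_measure_mono) (auto simp: prob_on_interval_def)
  then show ?thesis using P prob_le_1[of "{..t}"] unfolding prob_on_interval_def by linarith
qed

lemma quantile_le_iff:
  assumes P: "prob_on_interval \<beta> \<mu>" and v: "0 < v" "v \<le> 1"
  shows "quantile \<mu> v \<le> t \<longleftrightarrow> v \<le> measure \<mu> {..t}"
proof -
  interpret prob_space \<mu> using P by (simp add: prob_on_interval_def)
  have s: "sets \<mu> = sets borel" using P by (simp add: prob_on_interval_def)
  define T where "T = {t. v \<le> measure \<mu> {..t}}"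
  have q: "quantile \<mu> v = Inf T" by (simp add: quantile_def T_def)
  have "\<beta> \<in> T" using prob_on_interval_cdf_ge[OF P] v by (simp add: T_def)
  have "bdd_below T"
  proof (rule bdd_belowI)
    fix t assume "t \<in> T"
    then show "0 \<le> t" using prob_on_interval_cdf_neg[OF P, of t] v by (force simp: T_def)
  qed
  have cdf_mono: "measure \<mu> {..a} \<le> measure \<mu> {..b}" if "a \<le> b" for a b
    using s that by (intro finite_measure_mono) auto
  show ?thesis
  proof
    assume "v \<le> measure \<mu> {..t}"
    then show "quantile \<mu> v \<le> t" unfolding q using \<open>bdd_below T\<close> by (intro cInf_lower) (auto simp: T_def)
  next
    assume qt: "quantile \<mu> v \<le> t"
    have "finite_borel_measure \<mu>" using s by unfold_locales simp
    then have "(cdf \<mu> \<longlongrightarrow> cdf \<mu> (Inf T)) (at_right (Inf T))"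
      using finite_borel_measure.cdf_is_right_cont by (simp add: continuous_within)
    moreover have "eventually (\<lambda>s. v \<le> cdf \<mu> s) (at_right (Inf T))"
      using eventually_at_right_less[of "Inf T"]
    proof eventually_elim
      case (elim s)
      then obtain s' where "s' \<in> T" "s' < s" using \<open>\<beta> \<in> T\<close> cInf_lessD[of T s] by blast
      then show ?case using cdf_mono[of s' s] by (simp add: T_def cdf_def)
    qed
    ultimately have "v \<le> cdf \<mu> (Inf T)" by (rule tendsto_lowerbound) simp
    then show "v \<le> measure \<mu> {..t}" using cdf_mono[of "Inf T" t] qt q by (simp add: cdf_def)
  qed
qed

lemma quantile_bounds:
  assumes P: "prob_on_interval \<beta> \<mu>" and v: "0 < v" "v \<le> 1"
  shows "0 \<le> quantile \<mu> v" "quantile \<mu> v \<le> \<beta>"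
proof -
  show "quantile \<mu> v \<le> \<beta>"
    using quantile_le_iff[OF assms] prob_on_interval_cdf_ge[OF P] v by simp
  show "0 \<le> quantile \<mu> v"
  proof (rule ccontr)
    assume "\<not> 0 \<le> quantile \<mu> v"
    then have "measure \<mu> {..quantile \<mu> v} = 0" by (intro prob_on_interval_cdf_neg[OF P]) simp
    then show False using quantile_le_iff[OF assms, of "quantile \<mu> v"] v by simp
  qed
qed

text \<open>The quantile function is only meaningful on \<open>(0,1]\<close>; extending it by constants outside
  gives a monotone, hence Borel measurable, function on all of \<open>\<real>\<close>.\<close>
definition quantile_ext :: "real \<Rightarrow> real measure \<Rightarrow> real \<Rightarrow> real" where
  "quantile_ext \<beta> \<mu> v = (if v \<le> 0 then 0 else if 1 < v then \<beta> else quantile \<mu> v)"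

lemma quantile_ext_eq: "0 < v \<Longrightarrow> v \<le> 1 \<Longrightarrow> quantile_ext \<beta> \<mu> v = quantile \<mu> v"
  by (simp add: quantile_ext_def)

lemma quantile_ext_bounds:
  assumes "prob_on_interval \<beta> \<mu>"
  shows "0 \<le> quantile_ext \<beta> \<mu> v" "quantile_ext \<beta> \<mu> v \<le> \<beta>"
  using quantile_bounds[OF assms, of v] prob_on_interval_nonneg[OF assms]
  by (auto simp: quantile_ext_def)

lemma quantile_ext_le_iff:
  assumes P: "prob_on_interval \<beta> \<mu>" and v: "0 < v" "v \<le> 1"
  shows "quantile_ext \<beta> \<mu> v \<le> t \<longleftrightarrow> v \<le> measure \<mu> {..t}"
  using quantile_le_iff[OF assms] v by (simp add: quantile_ext_def)

lemma mono_quantile_ext: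
  assumes P: "prob_on_interval \<beta> \<mu>"
  shows "mono (quantile_ext \<beta> \<mu>)"
proof (rule monoI)
  fix u v :: real assume uv: "u \<le> v"
  show "quantile_ext \<beta> \<mu> u \<le> quantile_ext \<beta> \<mu> v"
  proof (cases "u \<le> 0 \<or> 1 < v")
    case True
    then show ?thesis using quantile_ext_bounds[OF P, of u] quantile_ext_bounds[OF P, of v] uv
      by (auto simp: quantile_ext_def)
  next
    case False
    then show ?thesis
      using quantile_ext_le_iff[OF P, of u "quantile_ext \<beta> \<mu> v"]
        quantile_ext_le_iff[OF P, of v "quantile_ext \<beta> \<mu> v"] uv
      by auto
  qed
qed

lemma borel_measurable_quantile_ext[measurable]:
  "prob_on_interval \<beta> \<mu> \<Longrightarrow> quantile_ext \<beta> \<mu> \<in> borel_measurable borel"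
  by (rule borel_measurable_mono[OF mono_quantile_ext])

abbreviation uniform01 :: "real measure" where
  "uniform01 \<equiv> uniform_measure lborel {0..1}"

lemma prob_space_uniform01: "prob_space uniform01"
  by (rule prob_space_uniform_measure) auto

lemma emeasure_uniform01:
  assumes "0 \<le> Z" "Z \<le> 1"
  shows "emeasure uniform01 {..Z} = ennreal Z" "emeasure uniform01 {Z<..} = ennreal (1 - Z)"
proof -
  have "{0..1} \<inter> {..Z} = {0..Z}" "{0..1} \<inter> {Z<..} = {Z<..1}" using assms by auto
  then show "emeasure uniform01 {..Z} = ennreal Z" "emeasure uniform01 {Z<..} = ennreal (1 - Z)"
    using assms by (simp_all add: divide_ennreal_def)
qed

lemma distr_uniform01_quantile_ext:
  assumes P: "prob_on_interval \<beta> \<mu>"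
  shows "distr uniform01 borel (quantile_ext \<beta> \<mu>) = \<mu>"
proof (rule cdf_unique)
  interpret U: prob_space uniform01 by (rule prob_space_uniform01)
  show "real_distribution (distr uniform01 borel (quantile_ext \<beta> \<mu>))"
    unfolding real_distribution_def real_distribution_axioms_def
    using P by (auto intro!: U.prob_space_distr)
  show "real_distribution \<mu>"
    unfolding real_distribution_def real_distribution_axioms_def
    using P by (auto simp: prob_on_interval_def)
  show "cdf (distr uniform01 borel (quantile_ext \<beta> \<mu>)) = cdf \<mu>"
  proof
    fix t
    let ?q = "quantile_ext \<beta> \<mu>"
    have pre: "?q -` {..t} \<in> sets borel"
      using measurable_sets[OF borel_measurable_quantile_ext[OF P], of "{..t}"] by simp
    have F01: "0 \<le> measure \<mu> {..t}" "measure \<mu> {..t} \<le> 1"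
      using P by (auto simp: prob_on_interval_def intro: prob_space.prob_le_1)
    have "{0..1} \<inter> ?q -` {..t} = (if t < 0 then {} else {0..measure \<mu> {..t}})"
    proof (cases "t < 0")
      case True
      then have "\<not> ?q v \<le> t" for v using quantile_ext_bounds(1)[OF P, of v] by linarith
      then show ?thesis using True by auto
    next
      case False
      have "v \<in> {0..1} \<inter> ?q -` {..t} \<longleftrightarrow> v \<in> {0..measure \<mu> {..t}}" for v
        using quantile_ext_le_iff[OF P, of v t] F01 False
        by (cases "v \<le> 0") (auto simp: quantile_ext_def)
      then show ?thesis using False by (simp add: set_eq_iff)
    qed
    then have "measure lborel ({0..1} \<inter> ?q -` {..t}) = measure \<mu> {..t}"
      using prob_on_interval_cdf_neg[OF P, of t] F01 by simp
    then show "cdf (distr uniform01 borel ?q) t = cdf \<mu> t"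
      unfolding cdf_def using P pre by (subst measure_distr) (auto simp: measure_uniform_measure)
  qed
qed

lemma integral_quantile_ext:
  assumes P: "prob_on_interval \<beta> \<mu>"
  shows "(\<integral>v. quantile_ext \<beta> \<mu> v \<partial>uniform01) = (\<integral>k. k \<partial>\<mu>)"
proof -
  have "(\<integral>k. k \<partial>\<mu>) = (\<integral>k. k \<partial>distr uniform01 borel (quantile_ext \<beta> \<mu>))"
    using distr_uniform01_quantile_ext[OF P] by simp
  also have "\<dots> = (\<integral>v. quantile_ext \<beta> \<mu> v \<partial>uniform01)" using P by (subst integral_distr) auto
  finally show ?thesis by simp
qed

lemma borel_measurable_fst_real[measurable (raw)]:
  fixes g :: "'b \<Rightarrow> real \<times> real"
  shows "g \<in> borel_measurable N \<Longrightarrow> (\<lambda>\<omega>. fst (g \<omega>)) \<in> borel_measurable N"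
  using measurable_fst'[of g N borel borel] by (simp add: borel_prod)

lemma borel_measurable_snd_real[measurable (raw)]:
  fixes g :: "'b \<Rightarrow> real \<times> real"
  shows "g \<in> borel_measurable N \<Longrightarrow> (\<lambda>\<omega>. snd (g \<omega>)) \<in> borel_measurable N"
  using measurable_snd'[of g N borel borel] by (simp add: borel_prod)

lemma nn_integral_distr_compose:
  assumes Y: "Y \<in> measurable M N" and g: "g \<in> measurable N K" and F: "F \<in> borel_measurable K"
  shows "(\<integral>\<^sup>+q. F (g q) \<partial>distr M N Y) = (\<integral>\<^sup>+v. F v \<partial>distr M K (\<lambda>\<omega>. g (Y \<omega>)))"
  using Y g F by (simp add: nn_integral_distr)

lemma (in prob_space) indep_var_nn_integral:
  assumes ind: "indep_var S X T Y" and f: "f \<in> borel_measurable (S \<Otimes>\<^sub>M T)"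
  shows "(\<integral>\<^sup>+\<omega>. f (X \<omega>, Y \<omega>) \<partial>M) = (\<integral>\<^sup>+x. \<integral>\<^sup>+y. f (x, y) \<partial>distr M T Y \<partial>distr M S X)"
proof -
  have rv: "random_variable S X" "random_variable T Y"
    and eq: "distr M S X \<Otimes>\<^sub>M distr M T Y = distr M (S \<Otimes>\<^sub>M T) (\<lambda>x. (X x, Y x))"
    using ind unfolding indep_var_distribution_eq by auto
  interpret DY: prob_space "distr M T Y" by (rule prob_space_distr[OF rv(2)])
  have "(\<integral>\<^sup>+\<omega>. f (X \<omega>, Y \<omega>) \<partial>M) = (\<integral>\<^sup>+p. f p \<partial>distr M (S \<Otimes>\<^sub>M T) (\<lambda>x. (X x, Y x)))"
    using rv f by (subst nn_integral_distr) auto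
  also have "\<dots> = (\<integral>\<^sup>+p. f p \<partial>(distr M S X \<Otimes>\<^sub>M distr M T Y))" by (simp add: eq)
  also have "\<dots> = (\<integral>\<^sup>+x. \<integral>\<^sup>+y. f (x, y) \<partial>distr M T Y \<partial>distr M S X)"
    using f by (intro DY.nn_integral_fst[symmetric]) (simp cong: measurable_cong_sets)
  finally show ?thesis .
qed

lemma mem_prod_emb_UNIV_iff:
  "f \<in> prod_emb UNIV (\<lambda>_. N) J (Pi\<^sub>E J D) \<longleftrightarrow> (\<forall>i. f i \<in> space N) \<and> (\<forall>k\<in>J. f k \<in> D k)"
  by (auto simp: prod_emb_def PiE_iff space_PiM)

lemma (in prob_space) prob_vimage_prod_emb:
  assumes X: "indep_vars (\<lambda>_. N) X UNIV" and J: "finite J" and D: "\<And>k. k \<in> J \<Longrightarrow> D k \<in> sets N"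
  shows "prob ((\<lambda>\<omega> i. X i \<omega>) -` prod_emb UNIV (\<lambda>_. N) J (Pi\<^sub>E J D) \<inter> space M)
    = (\<Prod>k\<in>J. prob (X k -` D k \<inter> space M))"
proof -
  have X_meas: "X i \<in> measurable M N" for i using X by (simp add: indep_vars_def)
  have mem: "(\<lambda>i. X i \<omega>) \<in> prod_emb UNIV (\<lambda>_. N) J (Pi\<^sub>E J D) \<longleftrightarrow> (\<forall>k\<in>J. X k \<omega> \<in> D k)"
    if "\<omega> \<in> space M" for \<omega>
    using measurable_space[OF X_meas that] by (simp add: mem_prod_emb_UNIV_iff)
  then have "(\<lambda>\<omega> i. X i \<omega>) -` prod_emb UNIV (\<lambda>_. N) J (Pi\<^sub>E J D) \<inter> space M
      = {\<omega> \<in> space M. \<forall>k\<in>J. X k \<omega> \<in> D k}"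
    by blast
  moreover have "prob {\<omega> \<in> space M. \<forall>k\<in>J. X k \<omega> \<in> D k} = (\<Prod>k\<in>J. prob (X k -` D k \<inter> space M))"
  proof (cases "J = {}")
    case True
    then show ?thesis by (simp add: prob_space)
  next
    case False
    then have "{\<omega> \<in> space M. \<forall>k\<in>J. X k \<omega> \<in> D k} = (\<Inter>k\<in>J. X k -` D k \<inter> space M)" by auto
    then show ?thesis using False J D by (simp only:) (intro indep_varsD[OF X], auto)
  qed
  ultimately show ?thesis by simp
qed

lemma (in prob_space) indep_vars_case_sum:
  fixes X Y :: "'i \<Rightarrow> 'a \<Rightarrow> 'b"
  assumes X: "indep_vars (\<lambda>_. N) X UNIV" and Y: "indep_vars (\<lambda>_. N) Y UNIV"
    and XY: "indep_var (Pi\<^sub>M UNIV (\<lambda>_. N)) (\<lambda>\<omega> i. X i \<omega>) (Pi\<^sub>M UNIV (\<lambda>_. N)) (\<lambda>\<omega> j. Y j \<omega>)"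
  shows "indep_vars (\<lambda>_. N) (case_sum X Y) UNIV"
proof -
  have rv: "random_variable N (case_sum X Y i)" for i
    using X Y by (cases i) (auto simp: indep_vars_def)
  show ?thesis unfolding indep_vars_def2
  proof (intro conjI ballI indep_setsI)
    fix i show "random_variable N (case_sum X Y i)" by (rule rv)
  next
    fix i show "{case_sum X Y i -` A \<inter> space M |A. A \<in> sets N} \<subseteq> events"
      using rv[of i] by (auto intro: measurable_sets)
  next
    fix A J assume J: "J \<noteq> {}" "J \<subseteq> UNIV" "finite J"
      and A: "\<forall>j\<in>J. A j \<in> {case_sum X Y j -` B \<inter> space M |B. B \<in> sets N}"
    then have "\<forall>j\<in>J. \<exists>B. A j = case_sum X Y j -` B \<inter> space M \<and> B \<in> sets N" by blast
    from bchoice[OF this] obtain D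
      where D: "\<And>j. j \<in> J \<Longrightarrow> A j = case_sum X Y j -` D j \<inter> space M \<and> D j \<in> sets N"
      by blast
    define JL where "JL = Inl -` J"
    define JR where "JR = Inr -` J"
    have fin: "finite JL" "finite JR"
      using J(3) by (auto simp: JL_def JR_def intro: finite_vimageI inj_onI)
    have J_eq: "J = Inl ` JL \<union> Inr ` JR"
      by (auto simp: JL_def JR_def image_iff) (metis sum.exhaust)
    define BL where "BL = prod_emb UNIV (\<lambda>_. N) JL (Pi\<^sub>E JL (\<lambda>k. D (Inl k)))"
    define BR where "BR = prod_emb UNIV (\<lambda>_. N) JR (Pi\<^sub>E JR (\<lambda>k. D (Inr k)))"
    have sets_B: "BL \<in> sets (Pi\<^sub>M UNIV (\<lambda>_. N))" "BR \<in> sets (Pi\<^sub>M UNIV (\<lambda>_. N))"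
      unfolding BL_def BR_def using fin D by (auto simp: JL_def JR_def intro!: sets_PiM_I)
    have A_Inl: "A (Inl k) = X k -` D (Inl k) \<inter> space M" if "k \<in> JL" for k
      using D[of "Inl k"] that by (simp add: JL_def)
    have A_Inr: "A (Inr k) = Y k -` D (Inr k) \<inter> space M" if "k \<in> JR" for k
      using D[of "Inr k"] that by (simp add: JR_def)
    have "\<omega> \<in> (\<Inter>j\<in>J. A j) \<longleftrightarrow> (\<forall>k\<in>JL. \<omega> \<in> A (Inl k)) \<and> (\<forall>k\<in>JR. \<omega> \<in> A (Inr k))" for \<omega>
      by (auto simp: J_eq)
    also have "\<dots> \<omega> \<longleftrightarrow> \<omega> \<in> space M \<and> (\<forall>k\<in>JL. X k \<omega> \<in> D (Inl k)) \<and> (\<forall>k\<in>JR. Y k \<omega> \<in> D (Inr k))"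
      for \<omega> using J(1) unfolding J_eq by (auto simp: A_Inl A_Inr)
    finally have mem: "\<omega> \<in> (\<Inter>j\<in>J. A j) \<longleftrightarrow>
        \<omega> \<in> space M \<and> (\<forall>k\<in>JL. X k \<omega> \<in> D (Inl k)) \<and> (\<forall>k\<in>JR. Y k \<omega> \<in> D (Inr k))" for \<omega> .
    have "X i \<omega> \<in> space N" "Y i \<omega> \<in> space N" if "\<omega> \<in> space M" for i \<omega>
      using measurable_space[OF rv[of "Inl i"] that] measurable_space[OF rv[of "Inr i"] that] by simp_all
    then have "(\<Inter>j\<in>J. A j) = (\<lambda>\<omega>. (\<lambda>i. X i \<omega>, \<lambda>j. Y j \<omega>)) -` (BL \<times> BR) \<inter> space M"
      by (intro set_eqI, unfold mem) (auto simp: BL_def BR_def mem_prod_emb_UNIV_iff)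
    then have "prob (\<Inter>j\<in>J. A j)
        = prob ((\<lambda>\<omega> i. X i \<omega>) -` BL \<inter> space M) * prob ((\<lambda>\<omega> j. Y j \<omega>) -` BR \<inter> space M)"
      using indep_varD[OF XY sets_B] by simp
    also have "prob ((\<lambda>\<omega> i. X i \<omega>) -` BL \<inter> space M) = (\<Prod>k\<in>JL. prob (X k -` D (Inl k) \<inter> space M))"
      unfolding BL_def by (rule prob_vimage_prod_emb[OF X fin(1)]) (use D in \<open>auto simp: JL_def\<close>)
    also have "prob ((\<lambda>\<omega> j. Y j \<omega>) -` BR \<inter> space M) = (\<Prod>k\<in>JR. prob (Y k -` D (Inr k) \<inter> space M))"
      unfolding BR_def by (rule prob_vimage_prod_emb[OF Y fin(2)]) (use D in \<open>auto simp: JR_def\<close>)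
    also have "(\<Prod>k\<in>JL. prob (X k -` D (Inl k) \<inter> space M)) * (\<Prod>k\<in>JR. prob (Y k -` D (Inr k) \<inter> space M))
        = (\<Prod>k\<in>JL. prob (A (Inl k))) * (\<Prod>k\<in>JR. prob (A (Inr k)))"
      by (simp add: A_Inl A_Inr)
    also have "\<dots> = (\<Prod>j\<in>J. prob (A j))"
      unfolding J_eq using fin by (subst prod.union_disjoint) (auto simp: prod.reindex)
    finally show "prob (\<Inter>j\<in>J. A j) = (\<Prod>j\<in>J. prob (A j))" .
  qed
qed

lemma (in prob_space) indep_vars_indep_var:
  assumes "indep_vars M' X I" "i \<in> I" "j \<in> I" "i \<noteq> j"
  shows "indep_var (M' i) (X i) (M' j) (X j)"
proof -
  have "indep_var (Pi\<^sub>M {i} M') (\<lambda>\<omega>. restrict (\<lambda>k. X k \<omega>) {i}) (Pi\<^sub>M {j} M') (\<lambda>\<omega>. restrict (\<lambda>k. X k \<omega>) {j})"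
    using assms by (intro indep_var_restrict) auto
  from indep_var_compose[OF this measurable_component_singleton measurable_component_singleton]
  show ?thesis by (simp add: comp_def)
qed

lemma (in prob_space) wasserstein1_return_le:
  assumes Z: "Z \<in> borel_measurable M"
  shows "wasserstein1 (distr M borel Z) (return borel z) \<le> (\<integral>\<^sup>+\<omega>. ennreal \<bar>Z \<omega> - z\<bar> \<partial>M)"
proof -
  have pm: "(\<lambda>\<omega>. (Z \<omega>, z)) \<in> measurable M (borel \<Otimes>\<^sub>M borel)" using Z by measurable
  define \<pi> where "\<pi> = distr M (borel \<Otimes>\<^sub>M borel) (\<lambda>\<omega>. (Z \<omega>, z))"
  have "prob_space \<pi>" unfolding \<pi>_def using pm by (rule prob_space_distr)
  moreover have "distr \<pi> borel fst = distr M borel Z" "distr \<pi> borel snd = return borel z"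
    unfolding \<pi>_def using pm by (subst distr_distr; simp add: comp_def)+
  ultimately have "wasserstein1 (distr M borel Z) (return borel z) \<le> (\<integral>\<^sup>+ p. ennreal \<bar>fst p - snd p\<bar> \<partial>\<pi>)"
    unfolding wasserstein1_def by (intro INF_lower) (simp add: \<pi>_def)
  also have "\<dots> = (\<integral>\<^sup>+\<omega>. ennreal \<bar>Z \<omega> - z\<bar> \<partial>M)"
    unfolding \<pi>_def using pm by (subst nn_integral_distr) auto
  finally show ?thesis .
qed

text \<open>Integrate the pointwise bound \<open>\<bar>d\<bar> \<le> d\<^sup>2/(2B) + B/2\<close>.\<close>
lemma (in prob_space) nn_integral_abs_less_of_sq:
  assumes f: "f \<in> borel_measurable M" and sq: "(\<integral>\<^sup>+\<omega>. ennreal ((f \<omega>)^2) \<partial>M) \<le> ennreal c"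
    and c: "0 \<le> c" "c < B^2" and B: "0 < B"
  shows "(\<integral>\<^sup>+\<omega>. ennreal \<bar>f \<omega>\<bar> \<partial>M) < ennreal B"
proof -
  have pt: "\<bar>d\<bar> \<le> (1/(2*B)) * d^2 + B/2" for d :: real
  proof -
    have "2*B*\<bar>d\<bar> \<le> d^2 + B^2"
      using zero_le_power2[of "\<bar>d\<bar> - B"] by (simp add: power2_eq_square algebra_simps)
    then show ?thesis using B by (simp add: field_simps power2_eq_square)
  qed
  have "(\<integral>\<^sup>+\<omega>. ennreal \<bar>f \<omega>\<bar> \<partial>M) \<le> (\<integral>\<^sup>+\<omega>. ennreal (1/(2*B)) * ennreal ((f \<omega>)^2) + ennreal (B/2) \<partial>M)"
    using pt B by (intro nn_integral_mono) (simp add: ennreal_plus[symmetric] ennreal_mult[symmetric] del: ennreal_plus)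
  also have "\<dots> = ennreal (1/(2*B)) * (\<integral>\<^sup>+\<omega>. ennreal ((f \<omega>)^2) \<partial>M) + ennreal (B/2)"
    using f by (subst nn_integral_add) (auto simp: nn_integral_cmult emeasure_space_1)
  also have "\<dots> \<le> ennreal (1/(2*B)) * ennreal c + ennreal (B/2)"
    using sq by (intro add_mono mult_left_mono) auto
  also have "\<dots> = ennreal (c/(2*B) + B/2)"
    using B c by (simp add: ennreal_plus[symmetric] ennreal_mult[symmetric] del: ennreal_plus)
  also have "\<dots> < ennreal B"
  proof (subst ennreal_less_iff)
    have "c/(2*B) < B^2/(2*B)" using c B by (intro divide_strict_right_mono) auto
    then show "c/(2*B) + B/2 < B" using B by (simp add: power2_eq_square)
  qed (use B c in auto)
  finally show ?thesis .
qed

lemma nn_integral_sq_dist_limit_le: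
  fixes f :: "nat \<Rightarrow> 'a \<Rightarrow> real"
  assumes f: "\<And>n. f n \<in> borel_measurable M" and lim: "AE \<omega> in M. (\<lambda>n. f n \<omega>) \<longlonglongrightarrow> g \<omega>"
    and bound: "\<And>n. (\<integral>\<^sup>+\<omega>. ennreal ((f n \<omega> - z)^2) \<partial>M) \<le> c"
  shows "(\<integral>\<^sup>+\<omega>. ennreal ((g \<omega> - z)^2) \<partial>M) \<le> c"
proof -
  have "(\<integral>\<^sup>+\<omega>. ennreal ((g \<omega> - z)^2) \<partial>M) = (\<integral>\<^sup>+\<omega>. liminf (\<lambda>n. ennreal ((f n \<omega> - z)^2)) \<partial>M)"
    using lim
  proof (intro nn_integral_cong_AE, eventually_elim)
    case (elim \<omega>)
    then have "(\<lambda>n. ennreal ((f n \<omega> - z)^2)) \<longlonglongrightarrow> ennreal ((g \<omega> - z)^2)"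
      by (intro tendsto_ennrealI tendsto_intros)
    then show ?case by (subst lim_imp_Liminf) simp_all
  qed
  also have "\<dots> \<le> liminf (\<lambda>n. \<integral>\<^sup>+\<omega>. ennreal ((f n \<omega> - z)^2) \<partial>M)"
    by (rule nn_integral_liminf) (use f in measurable)
  also have "\<dots> \<le> c" by (rule Liminf_le) (use bound in auto)
  finally show ?thesis .
qed

section \<open>The Lyapunov function\<close>

lemma one_div_add_le:
  fixes S k \<beta> :: real
  assumes S: "S > 0" and k: "0 \<le> k" "k \<le> \<beta>"
  shows "1/(S+k) \<le> 1/S - k/S^2 + \<beta>*k/S^3"
proof -
  have Sk: "S + k > 0" using S k by linarith
  have "1/(S+k) = 1/S - k/S^2 + k^2/(S^2*(S+k))"
    using S Sk by (simp add: divide_simps power2_eq_square) (simp add: algebra_simps)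
  also have "k^2/(S^2*(S+k)) \<le> \<beta>*k/S^3"
  proof -
    have "k*k \<le> \<beta>*k" using k by (intro mult_right_mono) auto
    then have "k*k*S \<le> \<beta>*k*(S+k)" using S k by (intro mult_mono) auto
    then show ?thesis using S Sk by (simp add: divide_simps power2_eq_square power3_eq_cube ac_simps)
  qed
  finally show ?thesis by simp
qed

text \<open>Adding \<open>k\<close> balls of the first colour to an urn of size \<open>S\<close> with proportion \<open>Z\<close> yields
  the proportion \<open>(Z S + k)/(S + k)\<close>.\<close>
lemma sq_dist_after_draw_le:
  fixes S Z z k \<beta> :: real
  assumes S: "S > 0" and Z: "0 \<le> Z" "Z \<le> 1" and z: "0 \<le> z" "z \<le> 1" and k: "0 \<le> k" "k \<le> \<beta>"
  shows "((Z*S + k)/(S+k) - z)^2 \<le> (Z-z)^2 + k*(2*(Z-z)*(1-Z)/S) + 3*(\<beta>*k*(1-Z)/S^2)"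
proof -
  define d where "d = k*(1-Z)/(S+k)"
  define d0 where "d0 = k*(1-Z)/S"
  have Sk: "S + k > 0" using S k by linarith
  have dd: "(Z*S + k)/(S+k) = Z + d" using Sk by (simp add: d_def field_simps)
  have e: "d0 - d = k^2*(1-Z)/(S*(S+k))" using S Sk
    by (simp add: d_def d0_def field_simps power2_eq_square)
  have d_le: "0 \<le> d0 - d" unfolding e using S Sk k Z by (intro divide_nonneg_pos mult_nonneg_nonneg) auto
  have kk: "k^2*(1-Z) \<le> \<beta>*k*(1-Z)" using k Z
    by (intro mult_right_mono) (auto simp: power2_eq_square mult_right_mono)
  have "k^2*(1-Z)/(S*(S+k)) \<le> k^2*(1-Z)/(S*S)"
    using S Sk k Z by (intro divide_left_mono mult_nonneg_nonneg mult_left_mono mult_pos_pos) auto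
  also have "\<dots> \<le> \<beta>*k*(1-Z)/S^2" using kk S by (simp add: power2_eq_square divide_right_mono)
  finally have d0_d: "d0 - d \<le> \<beta>*k*(1-Z)/S^2" unfolding e .
  have "0 \<le> d" using Sk k Z by (simp add: d_def)
  then have "d^2 \<le> d0^2" using d_le by (intro power_mono) auto
  also have "d0^2 = k^2*(1-Z)^2/S^2" by (simp add: d0_def power_divide power_mult_distrib)
  also have "\<dots> \<le> \<beta>*k*(1-Z)/S^2"
  proof -
    have "(1-Z)^2 \<le> 1-Z" using Z by (simp add: power2_eq_square mult_left_le)
    then have "k^2*(1-Z)^2 \<le> k^2*(1-Z)" by (intro mult_left_mono) auto
    then show ?thesis using kk S by (simp add: divide_right_mono)
  qed
  finally have d_sq: "d^2 \<le> \<beta>*k*(1-Z)/S^2" .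
  have cross: "(Z-z)*(d-d0) \<le> d0-d"
  proof -
    have "\<bar>Z - z\<bar> \<le> 1" using Z z by auto
    then have "\<bar>Z-z\<bar>*(d0-d) \<le> d0-d" using d_le by (simp add: mult_left_le_one_le)
    moreover have "(z-Z)*(d0-d) \<le> \<bar>Z-z\<bar>*(d0-d)" using d_le by (intro mult_right_mono) auto
    ultimately show ?thesis by (simp add: algebra_simps)
  qed
  have "(Z + d - z)^2 = (Z-z)^2 + 2*(Z-z)*d0 + 2*((Z-z)*(d-d0)) + d^2"
    by (simp add: power2_eq_square algebra_simps)
  also have "2*(Z-z)*d0 = k*(2*(Z-z)*(1-Z)/S)" by (simp add: d0_def)
  finally have "(Z + d - z)^2 = (Z-z)^2 + k*(2*(Z-z)*(1-Z)/S) + 2*((Z-z)*(d-d0)) + d^2" .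
  \<comment> \<open>stated abstractly, since \<open>linarith\<close> does not treat the products above as atoms\<close>
  moreover have "\<And>a b c p q e :: real. a = b + 2*c + e \<Longrightarrow> c \<le> p \<Longrightarrow> p \<le> q \<Longrightarrow> e \<le> q \<Longrightarrow> a \<le> b + 3*q"
    by linarith
  ultimately show ?thesis unfolding dd using cross d0_d d_sq by blast
qed

definition urn_potential :: "real \<Rightarrow> real \<Rightarrow> real \<Rightarrow> real \<Rightarrow> real" where
  "urn_potential z \<beta> X Y = (X/(X+Y) - z)^2 + 3*\<beta>/(X+Y)"

lemma borel_measurable_urn_potential[measurable]:
  assumes [measurable]: "f \<in> borel_measurable N" "g \<in> borel_measurable N"
  shows "(\<lambda>\<omega>. urn_potential z \<beta> (f \<omega>) (g \<omega>)) \<in> borel_measurable N"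
  unfolding urn_potential_def by measurable

lemma urn_potential_nonneg: "0 \<le> \<beta> \<Longrightarrow> 0 \<le> X + Y \<Longrightarrow> 0 \<le> urn_potential z \<beta> X Y"
  by (simp add: urn_potential_def)

lemma urn_potential_swap: "X + Y \<noteq> 0 \<Longrightarrow> urn_potential z \<beta> X Y = urn_potential (1 - z) \<beta> Y X"
  by (simp add: urn_potential_def field_simps power2_eq_square)

text \<open>The coefficient of \<open>k\<close> in the first-order bound for the potential after adding \<open>k\<close> balls
  of the first colour.\<close>
definition urn_drift :: "real \<Rightarrow> real \<Rightarrow> real \<Rightarrow> real \<Rightarrow> real" where
  "urn_drift z \<beta> X Y = (let S = X + Y; Z = X/S in
     2*(Z-z)*(1-Z)/S + 3*(1-Z)*\<beta>/S^2 - 3*\<beta>/S^2 + 3*\<beta>^2/S^3)"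

lemma urn_potential_add_first_le:
  assumes X: "0 \<le> X" "0 \<le> Y" "0 < X + Y" and z: "0 \<le> z" "z \<le> 1" and k: "0 \<le> k" "k \<le> \<beta>"
  shows "urn_potential z \<beta> (X + k) Y \<le> urn_potential z \<beta> X Y + k * urn_drift z \<beta> X Y"
proof -
  define S where "S = X + Y"
  define Z where "Z = X / S"
  have S: "S > 0" using X by (simp add: S_def)
  have ZS: "Z*S = X" using S by (simp add: Z_def)
  have Z: "0 \<le> Z" "Z \<le> 1" using X S by (auto simp: Z_def S_def)
  have "urn_potential z \<beta> (X + k) Y = ((Z*S + k)/(S+k) - z)^2 + 3*\<beta>*(1/(S+k))"
    unfolding ZS by (simp add: urn_potential_def S_def algebra_simps)
  also have "\<dots> \<le> (Z-z)^2 + k*(2*(Z-z)*(1-Z)/S) + 3*(\<beta>*k*(1-Z)/S^2)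
      + 3*\<beta>*(1/S - k/S^2 + \<beta>*k/S^3)"
    using sq_dist_after_draw_le[OF S Z z k] one_div_add_le[OF S k] k
    by (intro add_mono mult_left_mono) auto
  also have "\<dots> = (Z-z)^2 + 3*\<beta>/S + k*(2*(Z-z)*(1-Z)/S + 3*(1-Z)*\<beta>/S^2 - 3*\<beta>/S^2 + 3*\<beta>^2/S^3)"
    by (simp add: algebra_simps add_divide_distrib diff_divide_distrib power2_eq_square)
  also have "\<dots> = urn_potential z \<beta> X Y + k * urn_drift z \<beta> X Y"
    unfolding urn_potential_def urn_drift_def Let_def S_def[symmetric] Z_def[symmetric] ..
  finally show ?thesis .
qed

lemma urn_potential_add_second_le:
  assumes X: "0 \<le> X" "0 \<le> Y" "0 < X + Y" and z: "0 \<le> z" "z \<le> 1" and k: "0 \<le> k" "k \<le> \<beta>"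
  shows "urn_potential z \<beta> X (Y + k) \<le> urn_potential z \<beta> X Y + k * urn_drift (1 - z) \<beta> Y X"
proof -
  have "urn_potential z \<beta> X (Y + k) = urn_potential (1 - z) \<beta> (Y + k) X"
    using X k by (intro urn_potential_swap) simp
  also have "\<dots> \<le> urn_potential (1 - z) \<beta> Y X + k * urn_drift (1 - z) \<beta> Y X"
    using X z k by (intro urn_potential_add_first_le) auto
  also have "urn_potential (1 - z) \<beta> Y X = urn_potential z \<beta> X Y"
    using X by (intro urn_potential_swap[symmetric]) simp
  finally show ?thesis .
qed

text \<open>Weighted by the probabilities \<open>X/(X+Y)\<close> and \<open>Y/(X+Y)\<close> of the two colours, the terms of
  order \<open>1/S\<close> cancel, and the remaining terms of order \<open>\<beta>/S\<^sup>2\<close> are negative once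
  \<open>S = X + Y \<ge> 2\<beta>\<close>.\<close>
lemma urn_drift_combination_nonpos:
  assumes X: "0 \<le> X" "0 \<le> Y" "0 < X + Y" and \<beta>: "0 \<le> \<beta>" "2*\<beta> \<le> X + Y"
  shows "X/(X+Y) * urn_drift z \<beta> X Y + Y/(X+Y) * urn_drift (1 - z) \<beta> Y X \<le> 0"
proof -
  define S where "S = X + Y"
  define Z where "Z = X / S"
  have S: "S > 0" using X by (simp add: S_def)
  have YS: "Y/S = 1 - Z" using S by (simp add: Z_def S_def field_simps)
  have "urn_drift z \<beta> X Y = 2*(Z-z)*(1-Z)/S + 3*(1-Z)*\<beta>/S^2 - 3*\<beta>/S^2 + 3*\<beta>^2/S^3"
    unfolding urn_drift_def Let_def S_def[symmetric] Z_def[symmetric] ..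
  moreover have "urn_drift (1 - z) \<beta> Y X
      = 2*((1-Z)-(1-z))*(1-(1-Z))/S + 3*(1-(1-Z))*\<beta>/S^2 - 3*\<beta>/S^2 + 3*\<beta>^2/S^3"
    unfolding urn_drift_def Let_def add.commute[of Y X] S_def[symmetric] YS ..
  ultimately have "X/(X+Y) * urn_drift z \<beta> X Y + Y/(X+Y) * urn_drift (1 - z) \<beta> Y X
      = 6*(Z*(1-Z))*(\<beta>/S^2) - 3*(\<beta>/S^2) + 3*(\<beta>^2/S^3)"
    using S YS by (simp flip: S_def Z_def) (simp add: field_simps power2_eq_square power3_eq_cube)
  also have "\<dots> \<le> 0"
  proof -
    have "Z*(1-Z) \<le> 1/4" using zero_le_power2[of "Z - 1/2"] by (simp add: power2_eq_square algebra_simps)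
    then have "6*(Z*(1-Z))*(\<beta>/S^2) \<le> 6*(1/4)*(\<beta>/S^2)" using \<beta> by (intro mult_right_mono) auto
    moreover have "\<beta>^2/S^3 \<le> (1/2)*(\<beta>/S^2)"
    proof -
      have "\<beta>*\<beta> \<le> \<beta>*(S/2)" using \<beta> by (intro mult_left_mono) (auto simp: S_def)
      then have "\<beta>*\<beta>/S^3 \<le> \<beta>*(S/2)/S^3" using S by (intro divide_right_mono) auto
      also have "\<beta>*(S/2)/S^3 = (1/2)*(\<beta>/S^2)" using S by (simp add: field_simps power2_eq_square power3_eq_cube)
      finally show ?thesis by (simp add: power2_eq_square)
    qed
    ultimately show ?thesis by linarith
  qed
  finally show ?thesis .
qed

lemma nn_integral_quantile_ext_le_affine:
  assumes P: "prob_on_interval \<beta> \<mu>"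
    and f: "\<And>k. 0 \<le> k \<Longrightarrow> k \<le> \<beta> \<Longrightarrow> 0 \<le> f k \<and> f k \<le> p + k*A"
  shows "(\<integral>\<^sup>+v. ennreal (f (quantile_ext \<beta> \<mu> v)) \<partial>uniform01) \<le> ennreal (p + (\<integral>k. k \<partial>\<mu>)*A)"
    and "0 \<le> p + (\<integral>k. k \<partial>\<mu>)*A"
proof -
  interpret U: prob_space uniform01 by (rule prob_space_uniform01)
  let ?q = "quantile_ext \<beta> \<mu>"
  have int_q: "integrable uniform01 ?q"
    using P quantile_ext_bounds[OF P] prob_on_interval_nonneg[OF P]
    by (intro U.integrable_const_bound[where B=\<beta>]) auto
  have nonneg: "0 \<le> p + ?q v * A" for v using f quantile_ext_bounds[OF P] by (meson order.trans)
  have int_eq: "(\<integral>v. p + ?q v * A \<partial>uniform01) = p + (\<integral>k. k \<partial>\<mu>)*A"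
    using int_q integral_quantile_ext[OF P] by (simp add: U.prob_space)
  have "(\<integral>\<^sup>+v. ennreal (f (?q v)) \<partial>uniform01) \<le> (\<integral>\<^sup>+v. ennreal (p + ?q v * A) \<partial>uniform01)"
    using f quantile_ext_bounds[OF P] by (intro nn_integral_mono ennreal_leI) auto
  also have "\<dots> = ennreal (\<integral>v. p + ?q v * A \<partial>uniform01)"
    using int_q nonneg by (intro nn_integral_eq_integral) auto
  finally show "(\<integral>\<^sup>+v. ennreal (f (?q v)) \<partial>uniform01) \<le> ennreal (p + (\<integral>k. k \<partial>\<mu>)*A)"
    unfolding int_eq .
  have "0 \<le> (\<integral>v. p + ?q v * A \<partial>uniform01)" using nonneg by (intro integral_nonneg_AE) auto
  then show "0 \<le> p + (\<integral>k. k \<partial>\<mu>)*A" unfolding int_eq .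
qed

lemma nn_integral_uniform01_if:
  assumes "0 \<le> Z" "Z \<le> 1"
  shows "(\<integral>\<^sup>+u. (if u \<le> Z then a else b) \<partial>uniform01) = a * ennreal Z + b * ennreal (1 - Z)"
proof -
  have "(\<integral>\<^sup>+u. (if u \<le> Z then a else b) \<partial>uniform01)
      = (\<integral>\<^sup>+u. a * indicator {..Z} u + b * indicator {Z<..} u \<partial>uniform01)"
    by (intro nn_integral_cong) (auto simp: indicator_def)
  also have "\<dots> = a * ennreal Z + b * ennreal (1 - Z)"
    using emeasure_uniform01[OF assms] by (subst nn_integral_add) (auto simp: nn_integral_cmult_indicator)
  finally show ?thesis .
qed

text \<open>Since \<open>\<mu>\<close> and \<open>\<nu>\<close> have the same mean \<open>m\<close>, the bound is
  \<open>urn_potential z \<beta> X Y\<close> plus \<open>m\<close> times the left-hand side of \<open>urn_drift_combination_nonpos\<close>.\<close>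
lemma urn_potential_step_le:
  assumes P: "in_P m0 \<beta> \<mu> \<nu>" and m0: "0 < m0"
    and X: "0 \<le> X" "0 \<le> Y" "0 < X + Y" "2*\<beta> \<le> X + Y" and z: "0 \<le> z" "z \<le> 1"
  shows "(\<integral>\<^sup>+u. (if u \<le> X/(X+Y)
                  then \<integral>\<^sup>+v. ennreal (urn_potential z \<beta> (X + quantile_ext \<beta> \<mu> v) Y) \<partial>uniform01
                  else \<integral>\<^sup>+w. ennreal (urn_potential z \<beta> X (Y + quantile_ext \<beta> \<nu> w)) \<partial>uniform01)
               \<partial>uniform01)
         \<le> ennreal (urn_potential z \<beta> X Y)"
proof -
  have Pm: "prob_on_interval \<beta> \<mu>" and Pn: "prob_on_interval \<beta> \<nu>"
    and mean_eq: "(\<integral>k. k \<partial>\<nu>) = (\<integral>k. k \<partial>\<mu>)" and mean_ge: "m0 \<le> (\<integral>k. k \<partial>\<mu>)"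
    using P by (auto simp: in_P_def)
  define m where "m = (\<integral>k. k \<partial>\<mu>)"
  have "0 \<le> m" using m0 mean_ge by (simp add: m_def)
  have "0 \<le> \<beta>" using prob_on_interval_nonneg[OF Pm] .
  define Z where "Z = X/(X+Y)"
  have Z01: "0 \<le> Z" "Z \<le> 1" and YZ: "Y/(X+Y) = 1 - Z" using X by (auto simp: Z_def field_simps)
  define p where "p = urn_potential z \<beta> X Y"
  define A where "A = urn_drift z \<beta> X Y"
  define B where "B = urn_drift (1 - z) \<beta> Y X"
  define I1 where "I1 = (\<integral>\<^sup>+v. ennreal (urn_potential z \<beta> (X + quantile_ext \<beta> \<mu> v) Y) \<partial>uniform01)"
  define I2 where "I2 = (\<integral>\<^sup>+w. ennreal (urn_potential z \<beta> X (Y + quantile_ext \<beta> \<nu> w)) \<partial>uniform01)"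
  have I1: "I1 \<le> ennreal (p + m*A)" "0 \<le> p + m*A"
    using nn_integral_quantile_ext_le_affine[OF Pm, of "\<lambda>k. urn_potential z \<beta> (X + k) Y" p A]
      urn_potential_add_first_le[OF X(1-3) z] urn_potential_nonneg \<open>0 \<le> \<beta>\<close> X
    by (auto simp: I1_def p_def A_def m_def)
  have I2: "I2 \<le> ennreal (p + m*B)" "0 \<le> p + m*B"
    using nn_integral_quantile_ext_le_affine[OF Pn, of "\<lambda>k. urn_potential z \<beta> X (Y + k)" p B]
      urn_potential_add_second_le[OF X(1-3) z] urn_potential_nonneg \<open>0 \<le> \<beta>\<close> X
    by (auto simp: I2_def p_def B_def m_def mean_eq)
  have "(\<integral>\<^sup>+u. (if u \<le> X/(X+Y) then I1 else I2) \<partial>uniform01) = I1 * ennreal Z + I2 * ennreal (1-Z)"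
    unfolding Z_def using Z01 by (intro nn_integral_uniform01_if) (auto simp: Z_def)
  also have "\<dots> \<le> ennreal (p + m*A) * ennreal Z + ennreal (p + m*B) * ennreal (1-Z)"
    using I1 I2 by (intro add_mono mult_right_mono) auto
  also have "\<dots> = ennreal ((p + m*A)*Z + (p + m*B)*(1-Z))"
    using I1 I2 Z01 by (simp add: ennreal_mult[symmetric] ennreal_plus[symmetric] del: ennreal_plus)
  also have "\<dots> \<le> ennreal p"
  proof (rule ennreal_leI)
    have "Z*A + (1-Z)*B \<le> 0"
      using urn_drift_combination_nonpos[OF X(1-3) \<open>0 \<le> \<beta>\<close> X(4)] by (simp add: A_def B_def Z_def YZ)
    then have "m*(Z*A + (1-Z)*B) \<le> 0" using \<open>0 \<le> m\<close> by (simp add: mult_nonneg_nonpos)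
    then show "(p + m*A)*Z + (p + m*B)*(1-Z) \<le> p" by (simp add: algebra_simps)
  qed
  finally show ?thesis unfolding I1_def I2_def p_def .
qed

section \<open>The urn process\<close>

text \<open>The urn is driven by a single family indexed by \<open>nat + nat\<close>: \<open>Inl n\<close> carries \<open>U\<^sub>n\<close>
  in its first component, \<open>Inr n\<close> carries the pair \<open>(V\<^sub>n, W\<^sub>n)\<close>; \<open>a\<close> and \<open>b\<close> turn
  \<open>V\<^sub>n\<close> and \<open>W\<^sub>n\<close> into reinforcements.\<close>
definition urn_step :: "(real \<Rightarrow> real) \<Rightarrow> (real \<Rightarrow> real) \<Rightarrow> real \<times> real \<Rightarrow> real \<Rightarrow> real \<times> real \<Rightarrow> real \<times> real"
  where "urn_step a b s u vw = (if u \<le> fst s / (fst s + snd s)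
          then (fst s + a (fst vw), snd s) else (fst s, snd s + b (snd vw)))"

fun urn_state :: "(real \<Rightarrow> real) \<Rightarrow> (real \<Rightarrow> real) \<Rightarrow> real \<Rightarrow> real \<Rightarrow> (nat + nat \<Rightarrow> real \<times> real)
    \<Rightarrow> nat \<Rightarrow> real \<times> real" where
  "urn_state a b x y f 0 = (x, y)"
| "urn_state a b x y f (Suc n) = urn_step a b (urn_state a b x y f n) (fst (f (Inl (Suc n)))) (f (Inr (Suc n)))"

lemma rru_eq_urn_state:
  "rru \<mu> \<nu> x y U V W n = urn_state (quantile \<mu>) (quantile \<nu>) x y (case_sum (\<lambda>k. (U k, 0)) (\<lambda>k. (V k, W k))) n"
  by (induction n) (auto simp: urn_step_def split: prod.split)

lemma urn_state_cong:
  assumes "\<And>k. 0 < k \<Longrightarrow> k \<le> n \<Longrightarrow> fst (f (Inl k)) = fst (g (Inl k))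
      \<and> a (fst (f (Inr k))) = a' (fst (g (Inr k))) \<and> b (snd (f (Inr k))) = b' (snd (g (Inr k)))"
  shows "urn_state a b x y f n = urn_state a' b' x y g n"
  using assms by (induction n) (auto simp: urn_step_def)

lemma urn_state_nonneg:
  assumes "\<And>v. 0 \<le> a v" "\<And>v. 0 \<le> b v" "0 \<le> x" "0 \<le> y"
  shows "0 \<le> fst (urn_state a b x y f n)" "0 \<le> snd (urn_state a b x y f n)"
    "x + y \<le> fst (urn_state a b x y f n) + snd (urn_state a b x y f n)"
proof (induction n)
  case (Suc n)
  case 1 show ?case using Suc assms(1,2)[of "fst (f (Inr (Suc n)))"] by (auto simp: urn_step_def)
  case 2 show ?case using Suc assms(1,2)[of "snd (f (Inr (Suc n)))"] by (auto simp: urn_step_def)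
  case 3 show ?case using Suc assms(1,2)[of "fst (f (Inr (Suc n)))"] assms(1,2)[of "snd (f (Inr (Suc n)))"]
      by (auto simp: urn_step_def add_increasing2)
qed (use assms in auto)

lemma borel_measurable_urn_step:
  fixes g h :: "'b \<Rightarrow> real \<times> real"
  assumes [measurable]: "a \<in> borel_measurable borel" "b \<in> borel_measurable borel"
    "g \<in> borel_measurable N" "u \<in> borel_measurable N" "h \<in> borel_measurable N"
  shows "(\<lambda>\<omega>. urn_step a b (g \<omega>) (u \<omega>) (h \<omega>)) \<in> borel_measurable N"
  unfolding urn_step_def by measurable

lemma borel_measurable_urn_state:
  assumes a: "a \<in> borel_measurable borel" and b: "b \<in> borel_measurable borel"
    and I: "\<And>k. 0 < k \<Longrightarrow> k \<le> n \<Longrightarrow> Inl k \<in> I \<and> Inr k \<in> I"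
  shows "(\<lambda>f. urn_state a b x y f n) \<in> borel_measurable (Pi\<^sub>M I (\<lambda>_. borel :: (real \<times> real) measure))"
  using I
proof (induction n)
  case (Suc n)
  let ?P = "Pi\<^sub>M I (\<lambda>_. borel :: (real \<times> real) measure)"
  have l: "Inl (Suc n) \<in> I" and r: "Inr (Suc n) \<in> I" using Suc.prems by auto
  have u: "(\<lambda>f. fst (f (Inl (Suc n)))) \<in> borel_measurable ?P"
    by (rule borel_measurable_fst_real, rule measurable_component_singleton[OF l])
  have h: "(\<lambda>f. f (Inr (Suc n))) \<in> borel_measurable ?P" by (rule measurable_component_singleton[OF r])
  have g: "(\<lambda>f. urn_state a b x y f n) \<in> borel_measurable ?P" by (rule Suc.IH) (use Suc.prems in auto)
  show ?case unfolding urn_state.simps by (rule borel_measurable_urn_step[OF a b g u h])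
qed (simp only: urn_state.simps, rule measurable_const, simp)

locale urn_driver = prob_space M for M :: "'a measure" +
  fixes m0 \<beta> :: real and \<mu> \<nu> :: "real measure" and \<xi> :: "nat + nat \<Rightarrow> 'a \<Rightarrow> real \<times> real"
  assumes in_P: "in_P m0 \<beta> \<mu> \<nu>" and m0_pos: "0 < m0"
    and indep: "indep_vars (\<lambda>_. borel) \<xi> UNIV"
    and uniform_colour: "\<And>k. distr M borel (\<lambda>\<omega>. fst (\<xi> (Inl k) \<omega>)) = uniform01"
    and uniform_first: "\<And>k. distr M borel (\<lambda>\<omega>. fst (\<xi> (Inr k) \<omega>)) = uniform01"
    and uniform_second: "\<And>k. distr M borel (\<lambda>\<omega>. snd (\<xi> (Inr k) \<omega>)) = uniform01"
begin

abbreviation step :: "real \<times> real \<Rightarrow> real \<Rightarrow> real \<times> real \<Rightarrow> real \<times> real" where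
  "step \<equiv> urn_step (quantile_ext \<beta> \<mu>) (quantile_ext \<beta> \<nu>)"

abbreviation state :: "real \<Rightarrow> real \<Rightarrow> nat \<Rightarrow> 'a \<Rightarrow> real \<times> real" where
  "state x y n \<omega> \<equiv> urn_state (quantile_ext \<beta> \<mu>) (quantile_ext \<beta> \<nu>) x y (\<lambda>i. \<xi> i \<omega>) n"

abbreviation potential :: "real \<Rightarrow> real \<times> real \<Rightarrow> ennreal" where
  "potential z s \<equiv> ennreal (urn_potential z \<beta> (fst s) (snd s))"

lemma prob_on_interval_\<mu>: "prob_on_interval \<beta> \<mu>" and prob_on_interval_\<nu>: "prob_on_interval \<beta> \<nu>"
  using in_P by (auto simp: in_P_def)

lemma measurable_\<xi>[measurable]: "\<xi> i \<in> borel_measurable M"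
  using indep by (auto simp: indep_vars_def)

lemma measurable_quantile_ext[measurable]:
  "quantile_ext \<beta> \<mu> \<in> borel_measurable borel" "quantile_ext \<beta> \<nu> \<in> borel_measurable borel"
  using prob_on_interval_\<mu> prob_on_interval_\<nu> by measurable

lemma measurable_potential[measurable]: "potential z \<in> borel_measurable borel"
  using measurable_compose[OF _ measurable_ennreal] by measurable

lemma state_nonneg:
  assumes "0 \<le> x" "0 \<le> y"
  shows "0 \<le> fst (state x y n \<omega>)" "0 \<le> snd (state x y n \<omega>)"
    "x + y \<le> fst (state x y n \<omega>) + snd (state x y n \<omega>)"
  using urn_state_nonneg[OF _ _ assms] quantile_ext_bounds(1)[OF prob_on_interval_\<mu>]
    quantile_ext_bounds(1)[OF prob_on_interval_\<nu>] by blast+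

text \<open>By independence of the three driving variables, the integral is the iterated integral
  of \<open>urn_potential_step_le\<close>.\<close>
lemma nn_integral_potential_step_le:
  assumes z: "0 \<le> z" "z \<le> 1" and s: "0 \<le> fst s" "0 \<le> snd s" "0 < fst s + snd s" "2*\<beta> \<le> fst s + snd s"
  shows "(\<integral>\<^sup>+\<omega>. potential z (step s (fst (\<xi> (Inl m) \<omega>)) (\<xi> (Inr m) \<omega>)) \<partial>M) \<le> potential z s"
proof -
  define Zs where "Zs = fst s / (fst s + snd s)"
  define F1 where "F1 = (\<lambda>v. potential z (fst s + quantile_ext \<beta> \<mu> v, snd s))"
  define F2 where "F2 = (\<lambda>w. potential z (fst s, snd s + quantile_ext \<beta> \<nu> w))"
  have [measurable]: "F1 \<in> borel_measurable borel" "F2 \<in> borel_measurable borel"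
    unfolding F1_def F2_def by measurable
  have ind: "indep_var borel (\<xi> (Inl m)) borel (\<xi> (Inr m))"
    using indep by (rule indep_vars_indep_var) auto
  define K where "K = (\<lambda>(p :: real \<times> real, q :: real \<times> real). potential z (step s (fst p) q))"
  have K: "K \<in> borel_measurable (borel \<Otimes>\<^sub>M borel)" unfolding K_def split_beta'
    by (intro measurable_compose[OF _ measurable_potential] borel_measurable_urn_step
        measurable_quantile_ext borel_measurable_fst_real measurable_fst'' measurable_snd''
        measurable_const measurable_ident_sets) auto
  have "(\<integral>\<^sup>+\<omega>. potential z (step s (fst (\<xi> (Inl m) \<omega>)) (\<xi> (Inr m) \<omega>)) \<partial>M)
      = (\<integral>\<^sup>+p. \<integral>\<^sup>+q. K (p, q) \<partial>distr M borel (\<xi> (Inr m)) \<partial>distr M borel (\<xi> (Inl m)))"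
    using indep_var_nn_integral[OF ind K] by (simp add: K_def)
  also have "\<dots> = (\<integral>\<^sup>+p. (if fst p \<le> Zs then \<integral>\<^sup>+v. F1 v \<partial>uniform01 else \<integral>\<^sup>+w. F2 w \<partial>uniform01)
                      \<partial>distr M borel (\<xi> (Inl m)))"
  proof (intro nn_integral_cong)
    fix p :: "real \<times> real"
    show "(\<integral>\<^sup>+q. K (p, q) \<partial>distr M borel (\<xi> (Inr m)))
        = (if fst p \<le> Zs then \<integral>\<^sup>+v. F1 v \<partial>uniform01 else \<integral>\<^sup>+w. F2 w \<partial>uniform01)"
    proof (cases "fst p \<le> Zs")
      case True
      then have "(\<integral>\<^sup>+q. K (p, q) \<partial>distr M borel (\<xi> (Inr m))) = (\<integral>\<^sup>+q. F1 (fst q) \<partial>distr M borel (\<xi> (Inr m)))"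
        by (simp add: K_def F1_def urn_step_def Zs_def)
      also have "\<dots> = (\<integral>\<^sup>+v. F1 v \<partial>uniform01)"
        by (subst nn_integral_distr_compose[where F=F1 and g=fst and K=borel]) (auto simp: uniform_first)
      finally show ?thesis using True by simp
    next
      case False
      then have "(\<integral>\<^sup>+q. K (p, q) \<partial>distr M borel (\<xi> (Inr m))) = (\<integral>\<^sup>+q. F2 (snd q) \<partial>distr M borel (\<xi> (Inr m)))"
        by (simp add: K_def F2_def urn_step_def Zs_def)
      also have "\<dots> = (\<integral>\<^sup>+w. F2 w \<partial>uniform01)"
        by (subst nn_integral_distr_compose[where F=F2 and g=snd and K=borel]) (auto simp: uniform_second)
      finally show ?thesis using False by simp
    qed
  qed
  also have "\<dots> = (\<integral>\<^sup>+u. (if u \<le> Zs then \<integral>\<^sup>+v. F1 v \<partial>uniform01 else \<integral>\<^sup>+w. F2 w \<partial>uniform01) \<partial>uniform01)"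
    by (subst nn_integral_distr_compose[where g=fst and K=borel]) (auto simp: uniform_colour)
  also have "\<dots> \<le> potential z s"
    unfolding Zs_def F1_def F2_def fst_conv snd_conv
    by (rule urn_potential_step_le[OF in_P m0_pos s z])
  finally show ?thesis .
qed

text \<open>The state at time \<open>n\<close> is a function of the coordinates indexed by \<open>Inl ` {..n} \<union> Inr ` {..n}\<close>,
  which are independent of the pair driving step \<open>n + 1\<close>; conditioning on them reduces the
  claim to \<open>nn_integral_potential_step_le\<close>.\<close>
lemma nn_integral_potential_Suc_le:
  assumes xy: "0 \<le> x" "0 \<le> y" "0 < x + y" "2*\<beta> \<le> x + y" and z: "0 \<le> z" "z \<le> 1"
  shows "(\<integral>\<^sup>+\<omega>. potential z (state x y (Suc n) \<omega>) \<partial>M) \<le> (\<integral>\<^sup>+\<omega>. potential z (state x y n \<omega>) \<partial>M)"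
proof -
  let ?a = "quantile_ext \<beta> \<mu>" and ?b = "quantile_ext \<beta> \<nu>"
  define m where "m = Suc n"
  define past where "past = Inl ` {..n} \<union> Inr ` {..n}"
  define now where "now = {Inl m, Inr m}"
  let ?PA = "Pi\<^sub>M past (\<lambda>_. borel :: (real \<times> real) measure)"
  let ?PB = "Pi\<^sub>M now (\<lambda>_. borel :: (real \<times> real) measure)"
  define RA where "RA = (\<lambda>\<omega>. restrict (\<lambda>i. \<xi> i \<omega>) past)"
  define RB where "RB = (\<lambda>\<omega>. restrict (\<lambda>i. \<xi> i \<omega>) now)"
  have ind: "indep_var ?PA RA ?PB RB"
    unfolding RA_def RB_def by (rule indep_var_restrict[OF indep]) (auto simp: past_def now_def m_def)
  have RB[measurable]: "RB \<in> measurable M ?PB" using ind by (rule indep_var_rv2)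
  have past_meas: "(\<lambda>f. urn_state ?a ?b x y f n) \<in> borel_measurable ?PA"
    by (rule borel_measurable_urn_state) (auto simp: past_def)
  have state_RA: "urn_state ?a ?b x y (RA \<omega>) n = state x y n \<omega>" for \<omega>
    by (rule urn_state_cong) (auto simp: RA_def past_def)
  define H where "H = (\<lambda>(f, r). potential z (step (urn_state ?a ?b x y f n) (fst (r (Inl m))) (r (Inr m))))"
  have H: "H \<in> borel_measurable (?PA \<Otimes>\<^sub>M ?PB)"
  proof -
    have "(\<lambda>f. f (Inl m)) \<in> measurable ?PB borel" "(\<lambda>f. f (Inr m)) \<in> measurable ?PB borel"
      by (auto intro!: measurable_component_singleton simp: now_def)
    then have "(\<lambda>p. step (urn_state ?a ?b x y (fst p) n) (fst (snd p (Inl m))) (snd p (Inr m)))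
        \<in> borel_measurable (?PA \<Otimes>\<^sub>M ?PB)"
      using past_meas by (intro borel_measurable_urn_step measurable_quantile_ext borel_measurable_fst_real
          measurable_fst'' measurable_snd'')
    from measurable_compose[OF this measurable_potential] show ?thesis
      by (simp add: H_def split_beta' comp_def)
  qed
  have "(\<integral>\<^sup>+\<omega>. potential z (state x y (Suc n) \<omega>) \<partial>M) = (\<integral>\<^sup>+\<omega>. H (RA \<omega>, RB \<omega>) \<partial>M)"
    by (simp add: H_def RB_def state_RA m_def now_def)
  also have "\<dots> = (\<integral>\<^sup>+f. \<integral>\<^sup>+r. H (f, r) \<partial>distr M ?PB RB \<partial>distr M ?PA RA)"
    by (rule indep_var_nn_integral[OF ind H])
  also have "\<dots> \<le> (\<integral>\<^sup>+f. potential z (urn_state ?a ?b x y f n) \<partial>distr M ?PA RA)"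
  proof (rule nn_integral_mono)
    fix f assume "f \<in> space (distr M ?PA RA)"
    then have "(\<integral>\<^sup>+r. H (f, r) \<partial>distr M ?PB RB) = (\<integral>\<^sup>+\<omega>. H (f, RB \<omega>) \<partial>M)"
      using H by (subst nn_integral_distr) (auto intro: measurable_Pair2)
    also have "\<dots> = (\<integral>\<^sup>+\<omega>. potential z (step (urn_state ?a ?b x y f n) (fst (\<xi> (Inl m) \<omega>)) (\<xi> (Inr m) \<omega>)) \<partial>M)"
      by (simp add: H_def RB_def now_def)
    also have "\<dots> \<le> potential z (urn_state ?a ?b x y f n)"
      by (rule nn_integral_potential_step_le[OF z])
        (use urn_state_nonneg[OF _ _ xy(1,2), of ?a ?b f n] quantile_ext_bounds(1)[OF prob_on_interval_\<mu>]
          quantile_ext_bounds(1)[OF prob_on_interval_\<nu>] xy in auto)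
    finally show "(\<integral>\<^sup>+r. H (f, r) \<partial>distr M ?PB RB) \<le> potential z (urn_state ?a ?b x y f n)" .
  qed
  also have "\<dots> = (\<integral>\<^sup>+\<omega>. potential z (state x y n \<omega>) \<partial>M)"
    using indep_var_rv1[OF ind] past_meas by (subst nn_integral_distr) (auto simp: state_RA)
  finally show ?thesis .
qed

lemma nn_integral_potential_le:
  assumes xy: "0 \<le> x" "0 \<le> y" "0 < x + y" "2*\<beta> \<le> x + y" and z: "0 \<le> z" "z \<le> 1"
  shows "(\<integral>\<^sup>+\<omega>. potential z (state x y n \<omega>) \<partial>M) \<le> ennreal (urn_potential z \<beta> x y)"
proof (induction n)
  case 0 then show ?case by (simp add: emeasure_space_1)
next
  case (Suc n)
  with nn_integral_potential_Suc_le[OF assms, of n] show ?case by (rule order.trans)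
qed

lemma measurable_state[measurable]: "(\<lambda>\<omega>. state x y n \<omega>) \<in> borel_measurable M"
proof -
  have "(\<lambda>\<omega> i. \<xi> i \<omega>) \<in> measurable M (Pi\<^sub>M UNIV (\<lambda>_. borel :: (real \<times> real) measure))"
    by (rule measurable_PiM_single') auto
  moreover have "(\<lambda>f. urn_state (quantile_ext \<beta> \<mu>) (quantile_ext \<beta> \<nu>) x y f n)
      \<in> borel_measurable (Pi\<^sub>M UNIV (\<lambda>_. borel :: (real \<times> real) measure))"
    by (intro borel_measurable_urn_state measurable_quantile_ext) auto
  ultimately show ?thesis by (rule measurable_compose)
qed

abbreviation proportion :: "real \<Rightarrow> real \<Rightarrow> nat \<Rightarrow> 'a \<Rightarrow> real" where
  "proportion x y n \<omega> \<equiv> fst (state x y n \<omega>) / (fst (state x y n \<omega>) + snd (state x y n \<omega>))"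

lemma nn_integral_sq_dist_proportion_le:
  assumes xy: "0 \<le> x" "0 \<le> y" "0 < x + y" "2*\<beta> \<le> x + y"
  shows "(\<integral>\<^sup>+\<omega>. ennreal ((proportion x y n \<omega> - x/(x+y))^2) \<partial>M) \<le> ennreal (3*\<beta>/(x+y))"
proof -
  have z: "0 \<le> x/(x+y)" "x/(x+y) \<le> 1" using xy by auto
  have "0 \<le> \<beta>" using prob_on_interval_nonneg[OF prob_on_interval_\<mu>] .
  have "(\<integral>\<^sup>+\<omega>. ennreal ((proportion x y n \<omega> - x/(x+y))^2) \<partial>M)
      \<le> (\<integral>\<^sup>+\<omega>. potential (x/(x+y)) (state x y n \<omega>) \<partial>M)"
  proof (intro nn_integral_mono ennreal_leI)
    fix \<omega>
    have "x + y \<le> fst (state x y n \<omega>) + snd (state x y n \<omega>)" by (rule state_nonneg(3)[OF xy(1,2)])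
    then have "0 \<le> 3*\<beta> / (fst (state x y n \<omega>) + snd (state x y n \<omega>))"
      using xy \<open>0 \<le> \<beta>\<close> by (intro divide_nonneg_pos) auto
    then show "(proportion x y n \<omega> - x/(x+y))^2
        \<le> urn_potential (x/(x+y)) \<beta> (fst (state x y n \<omega>)) (snd (state x y n \<omega>))"
      by (simp add: urn_potential_def)
  qed
  also have "\<dots> \<le> ennreal (urn_potential (x/(x+y)) \<beta> x y)" by (rule nn_integral_potential_le[OF xy z])
  finally show ?thesis by (simp add: urn_potential_def)
qed

lemma nn_integral_sq_dist_limit_proportion_le:
  assumes xy: "0 \<le> x" "0 \<le> y" "0 < x + y" "2*\<beta> \<le> x + y"
    and lim: "AE \<omega> in M. (\<lambda>n. proportion x y n \<omega>) \<longlonglongrightarrow> L \<omega>"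
  shows "(\<integral>\<^sup>+\<omega>. ennreal ((L \<omega> - x/(x+y))^2) \<partial>M) \<le> ennreal (3*\<beta>/(x+y))"
proof (rule nn_integral_sq_dist_limit_le[OF _ lim nn_integral_sq_dist_proportion_le[OF xy]])
  show "(\<lambda>\<omega>. proportion x y n \<omega>) \<in> borel_measurable M" for n
    by (intro borel_measurable_divide borel_measurable_add borel_measurable_fst_real
        borel_measurable_snd_real measurable_state)
qed

text \<open>Almost surely all \<open>V\<^sub>n, W\<^sub>n\<close> lie in \<open>(0,1]\<close>, where \<open>quantile_ext\<close> agrees with \<open>quantile\<close>.\<close>
lemma AE_urn_state_quantile_eq:
  "AE \<omega> in M. \<forall>n. urn_state (quantile \<mu>) (quantile \<nu>) x y (\<lambda>i. \<xi> i \<omega>) n = state x y n \<omega>"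
proof -
  have unif: "AE v in uniform01. v \<in> {0<..1}"
    by (rule AE_uniform_measureI) (auto intro: AE_mp[OF AE_lborel_singleton[of 0]])
  have fst01: "AE \<omega> in M. fst (\<xi> (Inr k) \<omega>) \<in> {0<..1}" for k
  proof -
    have "AE v in distr M borel (\<lambda>\<omega>. fst (\<xi> (Inr k) \<omega>)). v \<in> {0<..1}"
      unfolding uniform_first by (rule unif)
    with borel_measurable_fst_real[OF measurable_\<xi>] show ?thesis by (rule AE_distrD)
  qed
  have snd01: "AE \<omega> in M. snd (\<xi> (Inr k) \<omega>) \<in> {0<..1}" for k
  proof -
    have "AE v in distr M borel (\<lambda>\<omega>. snd (\<xi> (Inr k) \<omega>)). v \<in> {0<..1}"
      unfolding uniform_second by (rule unif)
    with borel_measurable_snd_real[OF measurable_\<xi>] show ?thesis by (rule AE_distrD)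
  qed
  have "AE \<omega> in M. \<forall>k. fst (\<xi> (Inr k) \<omega>) \<in> {0<..1} \<and> snd (\<xi> (Inr k) \<omega>) \<in> {0<..1}"
    unfolding AE_all_countable by (intro allI AE_conjI fst01 snd01)
  then show ?thesis
    by eventually_elim (auto intro!: urn_state_cong simp: quantile_ext_eq)
qed

end

theorem lemma3p2:
  fixes m0 \<beta> x y :: real and \<mu> \<nu> :: "real measure"
    and M :: "'a measure" and U V W :: "nat \<Rightarrow> 'a \<Rightarrow> real" and Zinf :: "'a \<Rightarrow> real"
  assumes "0 < m0" and "m0 \<le> \<beta>"
    and P: "in_P m0 \<beta> \<mu> \<nu>"
    and S: "x \<ge> 0" "y \<ge> 0" "(x, y) \<noteq> (0, 0)"
    and big: "x + y \<ge> 2 * \<beta>"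
    and ps: "prob_space M"
    and U_indep: "prob_space.indep_vars M (\<lambda>_. borel) U UNIV"
    and U_unif: "\<And>n. distr M borel (U n) = uniform_measure lborel {0..1}"
    and VW_indep: "prob_space.indep_vars M (\<lambda>_. borel) (\<lambda>n \<omega>. (V n \<omega>, W n \<omega>)) UNIV"
    and VW_ident: "\<And>n. distr M borel (\<lambda>\<omega>. (V n \<omega>, W n \<omega>)) = distr M borel (\<lambda>\<omega>. (V 0 \<omega>, W 0 \<omega>))"
    and V_unif: "\<And>n. distr M borel (V n) = uniform_measure lborel {0..1}"
    and W_unif: "\<And>n. distr M borel (W n) = uniform_measure lborel {0..1}"
    and U_VW_indep: "prob_space.indep_var M
        (Pi\<^sub>M UNIV (\<lambda>_. borel :: (real \<times> real) measure)) (\<lambda>\<omega> n. (U n \<omega>, 0))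
        (Pi\<^sub>M UNIV (\<lambda>_. borel :: (real \<times> real) measure)) (\<lambda>\<omega> n. (V n \<omega>, W n \<omega>))"
    and Zinf_meas: "Zinf \<in> borel_measurable M"
    and Zinf_lim: "AE \<omega> in M. (\<lambda>n. rru_Z \<mu> \<nu> x y (\<lambda>k. U k \<omega>) (\<lambda>k. V k \<omega>) (\<lambda>k. W k \<omega>) n)
                      \<longlonglongrightarrow> Zinf \<omega>"
  shows "wasserstein1 (distr M borel Zinf) (return borel (x / (x + y)))
           < ennreal (2 * sqrt (\<beta> / (x + y)))"
proof -
  interpret prob_space M by (rule ps)
  define \<xi> where "\<xi> = case_sum (\<lambda>k \<omega>. (U k \<omega>, 0::real)) (\<lambda>k \<omega>. (V k \<omega>, W k \<omega>))"
  have "indep_vars (\<lambda>_. borel) (\<lambda>k \<omega>. (U k \<omega>, 0::real)) UNIV"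
    by (rule indep_vars_compose2[OF U_indep, of "\<lambda>_ u. (u, 0::real)", simplified]) simp
  then interpret urn_driver M m0 \<beta> \<mu> \<nu> \<xi>
    using P \<open>0 < m0\<close> indep_vars_case_sum[OF _ VW_indep U_VW_indep] U_unif V_unif W_unif
    by unfold_locales (simp_all add: \<xi>_def)
  have "0 < \<beta>" using assms(1,2) by linarith
  have "0 < x + y" using S by (cases "x = 0") auto
  have \<xi>_eq: "(\<lambda>i. \<xi> i \<omega>) = case_sum (\<lambda>k. (U k \<omega>, 0)) (\<lambda>k. (V k \<omega>, W k \<omega>))" for \<omega>
    by (rule ext) (simp add: \<xi>_def split: sum.split)
  have "AE \<omega> in M. (\<lambda>n. proportion x y n \<omega>) \<longlonglongrightarrow> Zinf \<omega>"
    using Zinf_lim AE_urn_state_quantile_eq[of x y]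
    by eventually_elim (simp add: rru_Z_def rru_eq_urn_state \<xi>_eq split_beta)
  from nn_integral_sq_dist_limit_proportion_le[OF S(1,2) \<open>0 < x + y\<close> big this]
  have "(\<integral>\<^sup>+\<omega>. ennreal \<bar>Zinf \<omega> - x/(x+y)\<bar> \<partial>M) < ennreal (2 * sqrt (\<beta>/(x+y)))"
  proof (rule nn_integral_abs_less_of_sq[rotated])
    have "(2 * sqrt (\<beta>/(x+y)))^2 = 4 * (\<beta>/(x+y))"
      using \<open>0 < \<beta>\<close> \<open>0 < x + y\<close> by (simp add: power_mult_distrib)
    then show "3*\<beta>/(x+y) < (2 * sqrt (\<beta>/(x+y)))^2"
      using \<open>0 < \<beta>\<close> \<open>0 < x + y\<close> by (simp add: divide_strict_right_mono)
  qed (use Zinf_meas \<open>0 < \<beta>\<close> \<open>0 < x + y\<close> in auto)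
  with wasserstein1_return_le[OF Zinf_meas] show ?thesis by (rule le_less_trans)
qed

end
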